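(* Let $d,H\ge1$, $T_{\max}\ge2$. Consider the model and loss defined in the context, with the unitary context distribution. Let $\theta^*=(\mathtt{A}^*,\mathtt{B}^*,P^* )$ satisfy $\ell(\theta^* )=0$ and set $\mathtt{C}^*=\mathtt{B}^{*\top}\mathtt{A}^*$. Then for every $T\in\{2,\dots,T_{\max}\}$: $P^*_{T-1,t}=0$ for all $t\in\{1,\dots,T-1\}$; $P^*_{T-1,T}\,\mathtt{C}^*_{ii}=1$ for all $i$; and $\mathtt{C}^*_{ij}=0$ for all $i\ne j$. Consequently $H\ge d$, and for every $\lambda$ with unit-modulus coordinates and $e_t=\lambda^{t-1}$, $\mathcal{T}_{\theta^*}(e_{1:T})=(\bar e_{T-1}\odot e_T)\odot e_T$ $(=\lambda^T)$.
   Context: Setting: $\lambda\in\mathbb{C}^d$ has i.i.d. coordinates uniform on the unit circle (unitary context distribution); $s_t=e_t=\lambda^{t-1}$ (coordinatewise powers; $s_1=1_d$, $s_{t+1}=\mathrm{diag}(\lambda)s_t$). Parameters $\theta=(\mathtt{A},\mathtt{B},P)$ with $\mathtt{A},\mathtt{B}\in\mathbb{R}^{H\times d}$ whose rows are $a_h,b_h\in\mathbb{R}^d$, and $P\in\mathbb{R}^{T_{\max}\times T_{\max}}$. Model: $\mathcal{T}_\theta(e_{1:T})=\sum_{h=1}^H\sum_{t=1}^T P_{T-1,t}\langle e_t,\mathrm{diag}(a_h)e_{T-1}\rangle_{\mathbb{C}}\mathrm{diag}(b_h)e_t$, where $\langle x,y\rangle_{\mathbb{C}}=\sum_i x_i\bar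 y_i$. Loss: $\ell(\theta)=\sum_{T=2}^{T_{\max}}\mathbb{E}_\lambda\|\mathcal{T}_\theta(e_{1:T})-s_{T+1}\|^2$ (Hermitian norm). $\odot$ is the coordinatewise product, bar is complex conjugation. *)

theory Defs
  imports "HOL-Probability.Probability"
begin

text \<open>Vectors in C^d are functions nat => complex, coordinates indexed by 0..d-1.
  Matrices A, B (H x d) are nat => nat => real with A h i the i-th coordinate of row a_h
  (h < H, i < d).  P is indexed 1-based: P r c for 1 <= r,c <= T_max.\<close>

definition cinner :: "nat \<Rightarrow> (nat \<Rightarrow> complex) \<Rightarrow> (nat \<Rightarrow> complex) \<Rightarrow> complex" where
  "cinner d x y = (\<Sum>i<d. x i * cnj (y i))"

definition cnorm2 :: "nat \<Rightarrow> (nat \<Rightarrow> complex) \<Rightarrow> real" where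
  "cnorm2 d x = (\<Sum>i<d. (cmod (x i))\<^sup>2)"

definition evec :: "(nat \<Rightarrow> complex) \<Rightarrow> nat \<Rightarrow> nat \<Rightarrow> complex" where
  "evec lam t = (\<lambda>i. lam i ^ (t - 1))"

definition model :: "nat \<Rightarrow> nat \<Rightarrow> (nat \<Rightarrow> nat \<Rightarrow> real) \<Rightarrow> (nat \<Rightarrow> nat \<Rightarrow> real)
    \<Rightarrow> (nat \<Rightarrow> nat \<Rightarrow> real) \<Rightarrow> (nat \<Rightarrow> complex) \<Rightarrow> nat \<Rightarrow> nat \<Rightarrow> complex" where
  "model d H A B P lam T = (\<lambda>i. \<Sum>h<H. \<Sum>t=1..T.
      complex_of_real (P (T - 1) t)
      * cinner d (evec lam t) (\<lambda>j. complex_of_real (A h j) * evec lam (T - 1) j)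
      * (complex_of_real (B h i) * evec lam t i))"

text \<open>Unitary context distribution: lambda_j = exp(i phi_j), phi_j i.i.d. uniform on [0, 2 pi].\<close>
definition torus_measure :: "nat \<Rightarrow> (nat \<Rightarrow> real) measure" where
  "torus_measure d = PiM {..<d} (\<lambda>_. uniform_measure lborel {0..2*pi})"

definition loss :: "nat \<Rightarrow> nat \<Rightarrow> nat \<Rightarrow> (nat \<Rightarrow> nat \<Rightarrow> real) \<Rightarrow> (nat \<Rightarrow> nat \<Rightarrow> real)
    \<Rightarrow> (nat \<Rightarrow> nat \<Rightarrow> real) \<Rightarrow> real" where
  "loss d H Tmax A B P = (\<Sum>T=2..Tmax.
      integral\<^sup>L (torus_measure d) (\<lambda>\<phi>.
        let lam = (\<lambda>j. cis (\<phi> j)) in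
        cnorm2 d (\<lambda>i. model d H A B P lam T i - evec lam (T + 1) i)))"

definition Cmat :: "nat \<Rightarrow> (nat \<Rightarrow> nat \<Rightarrow> real) \<Rightarrow> (nat \<Rightarrow> nat \<Rightarrow> real) \<Rightarrow> nat \<Rightarrow> nat \<Rightarrow> real" where
  "Cmat H A B i j = (\<Sum>h<H. B h i * A h j)"

end

theory Submission
  imports Defs "Jordan_Normal_Form.Determinant"
begin

text \<open>Write lambda_j = cis phi_j. Coordinate i of the model output is then a trigonometric
  polynomial in phi: the summand for position t and key coordinate j has coefficient
  P_{T-1,t} C_ij and frequency (t-T+1) e_j + (t-1) e_i, whereas the target lambda_i^T is the character
  of frequency T e_i. Zero loss makes them agree almost everywhere on the torus, so by orthonormality
  of the characters their coefficients agree frequency by frequency. Comparing them at the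
  frequencies of the summands (T,i), (T,j) and (t,i) yields P_{T-1,T} C_ii = 1, C_ij = 0 for j \<noteq> i,
  and P_{T-1,t} = 0 for t < T. Hence C = B^T A is an invertible diagonal d x d matrix factoring
  through R^H, so H \<ge> d, and only the summand (T,i) survives in the model output.\<close>

lemma cis_sum: "cis (\<Sum>k\<in>A. f k) = (\<Prod>k\<in>A. cis (f k))"
  by (induction A rule: infinite_finite_induct) (auto simp: cis_mult[symmetric])

lemma sum_eq_single:
  "finite S \<Longrightarrow> a \<in> S \<Longrightarrow> (\<And>x. x \<in> S \<Longrightarrow> x \<noteq> a \<Longrightarrow> f x = 0) \<Longrightarrow> sum f S = f a"
  by (subst sum.remove) (auto intro!: sum.neutral)

lemma cnj_power_mult_power:
  fixes z :: complex
  assumes "cmod z = 1" "m \<le> n"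
  shows "cnj (z ^ m) * z ^ n = z ^ (n - m)"
proof -
  have "cnj (z ^ m) * z ^ m = 1"
    using assms(1) complex_norm_square[of "z ^ m"] by (simp add: norm_power mult.commute)
  then show ?thesis
    using assms(2) by (metis le_add_diff_inverse mult.assoc mult_1 power_add)
qed

lemma measurable_cis [measurable]:
  "g \<in> borel_measurable M \<Longrightarrow> (\<lambda>x. cis (g x)) \<in> borel_measurable M"
  by (rule borel_measurable_continuous_on) (auto intro!: continuous_intros)

section \<open>Characters of the torus\<close>

abbreviation uniform_angle :: "real measure" where
  "uniform_angle \<equiv> uniform_measure lborel {0..2*pi}"

lemma prob_space_uniform_angle: "prob_space uniform_angle"
  by (rule prob_space_uniform_measure) auto

lemma product_prob_space_uniform_angle: "product_prob_space (\<lambda>_. uniform_angle)"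
  by (simp add: product_prob_space_def product_prob_space_axioms_def product_sigma_finite_def
      prob_space_uniform_angle prob_space_imp_sigma_finite)

lemma integral_cis_multiple_Icc:
  fixes n :: int
  shows "integral\<^sup>L lborel (\<lambda>x. indicator {0..2*pi} x *\<^sub>R cis (of_int n * x))
       = (if n = 0 then 2*pi else 0)"
proof (cases "n = 0")
  case True
  have "integral\<^sup>L lborel (\<lambda>x. indicator {0..2*pi} x *\<^sub>R (1::complex))
      = complex_of_real (2*pi) - complex_of_real 0"
  proof (rule integral_FTC_atLeastAtMost)
    fix x :: real
    have "((\<lambda>z::complex. z) has_field_derivative 1) (at (of_real x))"
      by (auto intro!: derivative_eq_intros)
    from has_vector_derivative_real_field[OF this]
    show "((\<lambda>x. complex_of_real x) has_vector_derivative 1) (at x within {0..2*pi})" .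
  qed auto
  then show ?thesis using True by simp
next
  case False
  let ?F = "\<lambda>x. cis (of_int n * x) / (\<i> * of_int n)"
  have "integral\<^sup>L lborel (\<lambda>x. indicator {0..2*pi} x *\<^sub>R cis (of_int n * x)) = ?F (2*pi) - ?F 0"
  proof (rule integral_FTC_atLeastAtMost)
    fix x :: real
    let ?G = "\<lambda>z::complex. exp (\<i> * of_int n * z) / (\<i> * of_int n)"
    have "(?G has_field_derivative exp (\<i> * of_int n * of_real x)) (at (of_real x))"
      using False by (auto intro!: derivative_eq_intros simp: field_simps)
    from has_vector_derivative_real_field[OF this, where s="{0..2*pi}"]
    show "(?F has_vector_derivative cis (of_int n * x)) (at x within {0..2*pi})"
      by (simp add: cis_conv_exp mult.assoc)
  qed (auto intro!: continuous_intros)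
  moreover have "cis (of_int n * (2*pi)) = 1"
    by (metis cis_multiple_2pi Ints_of_int mult.commute)
  ultimately show ?thesis using False by simp
qed

lemma integral_cis_multiple_uniform_angle:
  fixes n :: int
  shows "integral\<^sup>L uniform_angle (\<lambda>x. cis (of_int n * x)) = (if n = 0 then 1 else 0)"
proof -
  have "1 / ennreal (2*pi) = ennreal (1/(2*pi))"
    by (simp add: divide_ennreal ennreal_1[symmetric] del: ennreal_1)
  then have density: "uniform_angle = density lborel (\<lambda>x. ennreal (indicator {0..2*pi} x / (2*pi)))"
    unfolding uniform_measure_def by (intro density_cong) (auto simp: indicator_def)
  have "integral\<^sup>L uniform_angle (\<lambda>x. cis (of_int n * x))
      = integral\<^sup>L lborel (\<lambda>x. (1/(2*pi)) *\<^sub>R (indicator {0..2*pi} x *\<^sub>R cis (of_int n * x)))"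
    unfolding density by (subst integral_density) (auto simp: field_simps)
  also have "\<dots> = (if n = 0 then 1 else 0)"
    using integral_cis_multiple_Icc[of n] by (simp add: scaleR_conv_of_real)
  finally show ?thesis .
qed

lemma prob_space_torus_measure: "prob_space (torus_measure d)"
proof -
  interpret product_prob_space "\<lambda>_. uniform_angle" "{..<d}"
    by (rule product_prob_space_uniform_angle)
  show ?thesis
    unfolding torus_measure_def by (rule prob_space_PiM) (simp add: prob_space_uniform_angle)
qed

definition torus_char :: "nat \<Rightarrow> (nat \<Rightarrow> int) \<Rightarrow> (nat \<Rightarrow> real) \<Rightarrow> complex" where
  "torus_char d n \<phi> = cis (\<Sum>k<d. of_int (n k) * \<phi> k)"

lemma torus_char_measurable [measurable]: "torus_char d n \<in> borel_measurable (torus_measure d)"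
  unfolding torus_char_def torus_measure_def by measurable

lemma norm_torus_char [simp]: "norm (torus_char d n \<phi>) = 1"
  by (simp add: torus_char_def)

lemma integrable_torus_char: "integrable (torus_measure d) (torus_char d n)"
proof -
  interpret prob_space "torus_measure d" by (rule prob_space_torus_measure)
  show ?thesis by (rule integrable_const_bound[where B=1]) auto
qed

lemma torus_char_mult_cnj:
  "torus_char d n \<phi> * cnj (torus_char d m \<phi>) = torus_char d (\<lambda>k. n k - m k) \<phi>"
  by (simp add: torus_char_def cis_cnj cis_mult sum_subtractf[symmetric] algebra_simps)

lemma integral_torus_char:
  "integral\<^sup>L (torus_measure d) (torus_char d n) = (if \<forall>k<d. n k = 0 then 1 else 0)"
proof -
  interpret angle: prob_space uniform_angle by (rule prob_space_uniform_angle)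
  interpret product_prob_space "\<lambda>_. uniform_angle" "{..<d}"
    by (rule product_prob_space_uniform_angle)
  have "integral\<^sup>L (torus_measure d) (torus_char d n)
      = (\<integral>\<phi>. (\<Prod>k<d. cis (of_int (n k) * \<phi> k)) \<partial>Pi\<^sub>M {..<d} (\<lambda>_. uniform_angle))"
    unfolding torus_measure_def torus_char_def
    by (simp add: cis_sum)
  also have "\<dots> = (\<Prod>k<d. integral\<^sup>L uniform_angle (\<lambda>x. cis (of_int (n k) * x)))"
  proof (rule product_integral_prod)
    show "integrable uniform_angle (\<lambda>x. cis (of_int (n k) * x))" for k
      by (rule angle.integrable_const_bound[where B=1]) auto
  qed auto
  also have "\<dots> = (if \<forall>k<d. n k = 0 then 1 else 0)"
    by (auto simp: integral_cis_multiple_uniform_angle prod_zero_iff)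
  finally show ?thesis .
qed

definition trig_poly :: "nat \<Rightarrow> 'a set \<Rightarrow> ('a \<Rightarrow> complex) \<Rightarrow> ('a \<Rightarrow> nat \<Rightarrow> int)
    \<Rightarrow> (nat \<Rightarrow> real) \<Rightarrow> complex" where
  "trig_poly d K c \<nu> \<phi> = (\<Sum>k\<in>K. c k * torus_char d (\<nu> k) \<phi>)"

lemma trig_poly_measurable [measurable]:
  "trig_poly d K c \<nu> \<in> borel_measurable (torus_measure d)"
  unfolding trig_poly_def by measurable

lemma norm_trig_poly_le: "norm (trig_poly d K c \<nu> \<phi>) \<le> (\<Sum>k\<in>K. norm (c k))"
  unfolding trig_poly_def by (rule order_trans[OF norm_sum]) (simp add: norm_mult)

lemma trig_poly_mult_cnj:
  "trig_poly d K c \<nu> \<phi> * cnj (torus_char d m \<phi>) = trig_poly d K c (\<lambda>k j. \<nu> k j - m j) \<phi>"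
  by (simp add: trig_poly_def sum_distrib_right mult.assoc torus_char_mult_cnj)

lemma integral_trig_poly:
  "finite K \<Longrightarrow> integral\<^sup>L (torus_measure d) (trig_poly d K c \<nu>)
     = (\<Sum>k\<in>K. if \<forall>j<d. \<nu> k j = 0 then c k else 0)"
  unfolding trig_poly_def
  by (subst Bochner_Integration.integral_sum)
     (auto simp: integrable_torus_char integral_torus_char intro!: sum.cong)

lemma trig_poly_coeffs_if_AE_eq_torus_char:
  assumes "finite K" and "AE \<phi> in torus_measure d. trig_poly d K c \<nu> \<phi> = torus_char d n \<phi>"
  shows "(\<Sum>k\<in>K. if \<forall>j<d. \<nu> k j = m j then c k else 0) = (if \<forall>j<d. n j = m j then 1 else 0)"
proof -
  have "AE \<phi> in torus_measure d.
      trig_poly d K c (\<lambda>k j. \<nu> k j - m j) \<phi> = torus_char d (\<lambda>j. n j - m j) \<phi>"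
    using assms(2) by eventually_elim (metis trig_poly_mult_cnj torus_char_mult_cnj)
  then have "integral\<^sup>L (torus_measure d) (trig_poly d K c (\<lambda>k j. \<nu> k j - m j))
      = integral\<^sup>L (torus_measure d) (torus_char d (\<lambda>j. n j - m j))"
    by (rule integral_cong_AE[rotated 2]) measurable
  then show ?thesis
    using assms(1) by (simp add: integral_trig_poly integral_torus_char)
qed

section \<open>The model output as a trigonometric polynomial\<close>

lemma model_eq_sum_Cmat:
  "model d H A B P lam T i = (\<Sum>(t,j)\<in>{1..T}\<times>{..<d}.
      of_real (P (T-1) t * Cmat H A B i j) * (lam j ^ (t-1) * cnj (lam j ^ (T-2)) * lam i ^ (t-1)))"
proof -
  let ?w = "\<lambda>t j. lam j ^ (t-1) * cnj (lam j ^ (T-2)) * lam i ^ (t-1)"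
  have "model d H A B P lam T i
      = (\<Sum>h<H. \<Sum>t=1..T. \<Sum>j<d. of_real (P (T-1) t * (B h i * A h j)) * ?w t j)"
    unfolding model_def cinner_def evec_def diff_diff_left one_add_one
    by (intro sum.cong refl) (simp add: sum_distrib_left sum_distrib_right mult_ac)
  also have "\<dots> = (\<Sum>t=1..T. \<Sum>j<d. \<Sum>h<H. of_real (P (T-1) t * (B h i * A h j)) * ?w t j)"
    by (subst sum.swap) (simp add: sum.swap[of _ "{..<H}"])
  also have "\<dots> = (\<Sum>t=1..T. \<Sum>j<d. of_real (P (T-1) t * Cmat H A B i j) * ?w t j)"
    by (simp add: Cmat_def sum_distrib_left sum_distrib_right)
  finally show ?thesis
    by (simp add: sum.cartesian_product)
qed

definition axis_freq :: "nat \<Rightarrow> int \<Rightarrow> nat \<Rightarrow> int" where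
  "axis_freq i n = (\<lambda>k. if k = i then n else 0)"

text \<open>The frequency of the monomial lambda_j^(t-1) cnj(lambda_j)^(T-2) lambda_i^(t-1) through which
  position t and key coordinate j enter coordinate i of the model output.\<close>

definition attn_freq :: "nat \<Rightarrow> nat \<Rightarrow> nat \<Rightarrow> nat \<Rightarrow> nat \<Rightarrow> int" where
  "attn_freq T i t j = (\<lambda>k. axis_freq j (int t - int T + 1) k + axis_freq i (int t - 1) k)"

lemma torus_char_axis_freq: "i < d \<Longrightarrow> torus_char d (axis_freq i n) \<phi> = cis (of_int n * \<phi> i)"
  by (simp add: torus_char_def axis_freq_def if_distrib[of "\<lambda>x. of_int x * _"] cong: if_cong)

lemma cis_power_eq_torus_char: "i < d \<Longrightarrow> cis (\<phi> i) ^ n = torus_char d (axis_freq i (int n)) \<phi>"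
  by (simp add: torus_char_axis_freq Complex.DeMoivre)

lemma cis_attn_monomial_eq_torus_char:
  assumes "i < d" "j < d" "1 \<le> t" "2 \<le> T"
  shows "cis (\<phi> j) ^ (t-1) * cnj (cis (\<phi> j) ^ (T-2)) * cis (\<phi> i) ^ (t-1)
       = torus_char d (attn_freq T i t j) \<phi>"
proof -
  have "cis (\<phi> j) ^ (t-1) * cnj (cis (\<phi> j) ^ (T-2)) * cis (\<phi> i) ^ (t-1)
      = cis (real (t-1) * \<phi> j - real (T-2) * \<phi> j) * cis (real (t-1) * \<phi> i)"
    by (simp only: complex_cnj_power cis_cnj Complex.DeMoivre cis_mult diff_conv_add_uminus)
  also have "\<dots> = torus_char d (axis_freq j (int t - int T + 1)) \<phi>
      * torus_char d (axis_freq i (int t - 1)) \<phi>"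
    using assms by (simp add: torus_char_axis_freq of_nat_diff algebra_simps)
  also have "\<dots> = torus_char d (attn_freq T i t j) \<phi>"
    by (simp add: torus_char_def attn_freq_def sum.distrib distrib_right cis_mult)
  finally show ?thesis .
qed

lemma model_cis_eq_trig_poly:
  assumes "i < d" "2 \<le> T"
  shows "model d H A B P (\<lambda>j. cis (\<phi> j)) T i
       = trig_poly d ({1..T}\<times>{..<d}) (\<lambda>(t,j). of_real (P (T-1) t * Cmat H A B i j))
           (\<lambda>(t,j). attn_freq T i t j) \<phi>"
  unfolding model_eq_sum_Cmat trig_poly_def using assms
  by (intro sum.cong refl) (auto simp: cis_attn_monomial_eq_torus_char[unfolded One_nat_def]
      simp del: complex_cnj_power)

lemma attn_freq_last_diagonal: "attn_freq T i T i = axis_freq i (int T)"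
  by (auto simp: attn_freq_def axis_freq_def)

text \<open>Distinct monomials share a frequency only for t = T - 1, where the exponent of lambda_j
  vanishes.\<close>

lemma attn_freq_eq_iff:
  assumes "i < d" "j < d" "j' < d"
  shows "(\<forall>k<d. attn_freq T i t j k = attn_freq T i t' j' k) \<longleftrightarrow> t = t' \<and> (j = j' \<or> t + 1 = T)"
proof
  assume "\<forall>k<d. attn_freq T i t j k = attn_freq T i t' j' k"
  then have "attn_freq T i t j i = attn_freq T i t' j' i" "attn_freq T i t j j = attn_freq T i t' j' j"
    "attn_freq T i t j j' = attn_freq T i t' j' j'"
    using assms by auto
  then show "t = t' \<and> (j = j' \<or> t + 1 = T)"
    by (auto simp: attn_freq_def axis_freq_def split: if_splits)
qed (auto simp: attn_freq_def axis_freq_def)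

lemma model_eq_if_causal_diagonal:
  assumes "\<forall>t\<in>{1..T-1}. P (T-1) t = 0" "\<And>j. j < d \<Longrightarrow> j \<noteq> i \<Longrightarrow> Cmat H A B i j = 0"
    and "i < d" "2 \<le> T"
  shows "model d H A B P lam T i
    = of_real (P (T-1) T * Cmat H A B i i) * (cnj (evec lam (T-1) i) * evec lam T i * evec lam T i)"
  unfolding model_eq_sum_Cmat
proof (subst sum_eq_single[where a="(T,i)"])
  fix x assume x: "x \<in> {1..T}\<times>{..<d}" "x \<noteq> (T,i)"
  then obtain t j where "x = (t,j)" "t \<in> {1..T}" "j < d" by auto
  moreover have "P (T-1) t * Cmat H A B i j = 0"
    using assms(1) assms(2)[OF \<open>j < d\<close>] x(2) calculation by (cases "t = T") auto
  ultimately show "(case x of (t,j) \<Rightarrow> of_real (P (T-1) t * Cmat H A B i j)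
      * (lam j ^ (t-1) * cnj (lam j ^ (T-2)) * lam i ^ (t-1))) = 0"
    by simp
qed (use assms(3,4) in \<open>auto simp: evec_def mult_ac numeral_2_eq_2\<close>)

section \<open>Consequences of zero loss\<close>

lemma zero_loss_imp_AE_trig_poly_eq:
  assumes "loss d H Tmax A B P = 0" "T \<in> {2..Tmax}" "i < d"
  shows "AE \<phi> in torus_measure d.
    trig_poly d ({1..T}\<times>{..<d}) (\<lambda>(t,j). of_real (P (T-1) t * Cmat H A B i j))
      (\<lambda>(t,j). attn_freq T i t j) \<phi>
    = torus_char d (axis_freq i (int T)) \<phi>"
proof -
  interpret prob_space "torus_measure d" by (rule prob_space_torus_measure)
  define c where "c T i = (\<lambda>(t,j). complex_of_real (P (T-1) t * Cmat H A B i j))" for T i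
  define err where "err T i \<phi> = trig_poly d ({1..T}\<times>{..<d}) (c T i) (\<lambda>(t,j). attn_freq T i t j) \<phi>
      - torus_char d (axis_freq i (int T)) \<phi>" for T i \<phi>
  define F where "F T \<phi> = (\<Sum>i<d. (cmod (err T i \<phi>))\<^sup>2)" for T \<phi>
  have "loss d H Tmax A B P = (\<Sum>T=2..Tmax. integral\<^sup>L (torus_measure d) (F T))"
    unfolding loss_def Let_def cnorm2_def F_def err_def c_def
    by (intro sum.cong refl Bochner_Integration.integral_cong)
       (auto simp: model_cis_eq_trig_poly evec_def cis_power_eq_torus_char)
  moreover have integrable_F: "integrable (torus_measure d) (F T)" for T
    unfolding F_def
  proof (intro Bochner_Integration.integrable_sum)
    fix i
    let ?B = "(\<Sum>k\<in>{1..T}\<times>{..<d}. norm (c T i k)) + 1"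
    have "norm (err T i \<phi>) \<le> ?B" for \<phi>
      unfolding err_def by (rule order_trans[OF norm_triangle_ineq4]) (simp add: norm_trig_poly_le)
    then show "integrable (torus_measure d) (\<lambda>\<phi>. (cmod (err T i \<phi>))\<^sup>2)"
      by (intro integrable_const_bound[where B="?B\<^sup>2"]) (auto simp: err_def intro!: power_mono)
  qed
  moreover have F_nonneg: "0 \<le> F T \<phi>" for T \<phi>
    by (simp add: F_def sum_nonneg)
  ultimately have "integral\<^sup>L (torus_measure d) (F T) = 0"
    using assms(1,2) by (simp add: sum_nonneg_eq_0_iff integral_nonneg)
  then have "AE \<phi> in torus_measure d. F T \<phi> = 0"
    using integral_nonneg_eq_0_iff_AE[OF integrable_F] F_nonneg by simp
  then show ?thesis
    by eventually_elim (use assms(3) in \<open>simp add: F_def err_def c_def sum_nonneg_eq_0_iff\<close>)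
qed

lemma zero_loss_coefficient:
  assumes "loss d H Tmax A B P = 0" "T \<in> {2..Tmax}" "i < d" "j0 < d"
  shows "(\<Sum>(t,j)\<in>{1..T}\<times>{..<d}.
      if \<forall>k<d. attn_freq T i t j k = attn_freq T i t0 j0 k then P (T-1) t * Cmat H A B i j else 0)
    = (if t0 = T \<and> j0 = i then 1 else 0)" (is "?S = _")
proof -
  have "complex_of_real ?S = (\<Sum>(t,j)\<in>{1..T}\<times>{..<d}.
      if \<forall>k<d. attn_freq T i t j k = attn_freq T i t0 j0 k
      then complex_of_real (P (T-1) t * Cmat H A B i j) else 0)"
    by (simp add: of_real_sum case_prod_unfold if_distrib[of complex_of_real] cong: if_cong)
  also have "\<dots> = (if \<forall>k<d. axis_freq i (int T) k = attn_freq T i t0 j0 k then 1 else 0)"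
    using trig_poly_coeffs_if_AE_eq_torus_char[OF _ zero_loss_imp_AE_trig_poly_eq[OF assms(1-3)],
        of "attn_freq T i t0 j0"]
    unfolding case_prod_unfold by simp
  also have "\<dots> = complex_of_real (if t0 = T \<and> j0 = i then 1 else 0)"
    using assms(3,4) by (simp add: attn_freq_last_diagonal[symmetric] attn_freq_eq_iff)
  finally show ?thesis
    by (rule of_real_eq_iff[THEN iffD1])
qed

lemma zero_loss_diagonal:
  assumes "loss d H Tmax A B P = 0" "T \<in> {2..Tmax}" "i < d"
  shows "P (T-1) T * Cmat H A B i i = 1"
proof -
  have "(\<Sum>(t,j)\<in>{1..T}\<times>{..<d}.
      if \<forall>k<d. attn_freq T i t j k = attn_freq T i T i k then P (T-1) t * Cmat H A B i j else 0)
    = P (T-1) T * Cmat H A B i i"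
    by (subst sum_eq_single[where a="(T,i)"]) 
       (use assms in \<open>auto simp: attn_freq_eq_iff split: if_splits\<close>)
  then show ?thesis
    using zero_loss_coefficient[OF assms assms(3), of T] by simp
qed

lemma zero_loss_off_diagonal:
  assumes "loss d H Tmax A B P = 0" "T \<in> {2..Tmax}" "i < d" "j < d" "i \<noteq> j"
  shows "Cmat H A B i j = 0"
proof -
  have "(\<Sum>(t,j')\<in>{1..T}\<times>{..<d}.
      if \<forall>k<d. attn_freq T i t j' k = attn_freq T i T j k then P (T-1) t * Cmat H A B i j' else 0)
    = P (T-1) T * Cmat H A B i j"
    by (subst sum_eq_single[where a="(T,j)"]) 
       (use assms in \<open>auto simp: attn_freq_eq_iff split: if_splits\<close>)
  then have "P (T-1) T * Cmat H A B i j = 0"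
    using zero_loss_coefficient[OF assms(1-4), of T] assms(5) by simp
  then show ?thesis
    using zero_loss_diagonal[OF assms(1-3)] by auto
qed

lemma zero_loss_earlier_weights:
  assumes "loss d H Tmax A B P = 0" "T \<in> {2..Tmax}" "i < d" "t0 \<in> {1..T-1}"
  shows "P (T-1) t0 = 0"
proof -
  have "(\<Sum>(t,j)\<in>{1..T}\<times>{..<d}.
      if \<forall>k<d. attn_freq T i t j k = attn_freq T i t0 i k then P (T-1) t * Cmat H A B i j else 0)
    = P (T-1) t0 * Cmat H A B i i"
  proof (subst sum_eq_single[where a="(t0,i)"])
    fix x assume x: "x \<in> {1..T}\<times>{..<d}" "x \<noteq> (t0,i)"
    then obtain t j where "x = (t,j)" "j < d" by auto
    moreover have "Cmat H A B i j = 0" if "j \<noteq> i"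
      using zero_loss_off_diagonal[OF assms(1-3) \<open>j < d\<close>] that by simp
    ultimately show "(case x of (t,j) \<Rightarrow> if \<forall>k<d. attn_freq T i t j k = attn_freq T i t0 i k
        then P (T-1) t * Cmat H A B i j else 0) = 0"
      using x(2) assms(3) by (cases "j = i") (auto simp: attn_freq_eq_iff)
  qed (use assms in auto)
  then have "P (T-1) t0 * Cmat H A B i i = 0"
    using zero_loss_coefficient[OF assms(1-3) assms(3), of t0] assms(2,4) by auto
  then show ?thesis
    using zero_loss_diagonal[OF assms(1-3)] by auto
qed

lemma dim_le_if_Cmat_diagonal:
  fixes A B :: "nat \<Rightarrow> nat \<Rightarrow> real"
  assumes off: "\<And>i j. i < d \<Longrightarrow> j < d \<Longrightarrow> i \<noteq> j \<Longrightarrow> Cmat H A B i j = 0"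
    and diag: "\<And>i. i < d \<Longrightarrow> Cmat H A B i i \<noteq> 0"
  shows "d \<le> H"
proof (rule ccontr)
  assume "\<not> d \<le> H"
  then have Hd: "H < d" by simp
  define M1 :: "real mat" where "M1 = mat d d (\<lambda>(i,h). if h < H then B h i else 0)"
  define M2 :: "real mat" where "M2 = mat d d (\<lambda>(h,j). if h < H then A h j else 0)"
  have M1c: "M1 \<in> carrier_mat d d" and M2c: "M2 \<in> carrier_mat d d"
    by (auto simp: M1_def M2_def)
  have prod: "(M1 * M2) $$ (i,j) = Cmat H A B i j" if "i < d" "j < d" for i j
  proof -
    have "(M1 * M2) $$ (i,j) = (\<Sum>h\<in>{0..<d}. (if h < H then B h i else 0) * (if h < H then A h j else 0))"
      using that by (simp add: M1_def M2_def scalar_prod_def)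
    also have "\<dots> = (\<Sum>h\<in>{0..<H}. B h i * A h j)"
      by (rule sum.mono_neutral_cong_right) (use Hd in auto)
    finally show ?thesis by (simp add: Cmat_def atLeast0LessThan)
  qed
  have MMc: "M1 * M2 \<in> carrier_mat d d" using M1c M2c by auto
  have "upper_triangular (M1 * M2)"
    unfolding upper_triangular_def using MMc prod off by auto
  then have "det (M1 * M2) \<noteq> 0"
    using upper_triangular_imp_det_eq_0_iff[OF MMc] MMc prod diag by (auto simp: diag_mat_def)
  moreover have "det M1 = 0"
  proof -
    have "M1 *\<^sub>v unit_vec d H = 0\<^sub>v d"
      using Hd M1c by (intro eq_vecI) (auto simp: M1_def)
    moreover have "unit_vec d H \<noteq> (0\<^sub>v d :: real vec)"
      using Hd by (metis index_unit_vec(1) index_zero_vec(1) zero_neq_one)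
    ultimately show ?thesis
      using det_0_iff_vec_prod_zero_field[OF M1c] unit_vec_carrier[of d H] by blast
  qed
  ultimately show False
    using det_mult[OF M1c M2c] by simp
qed

theorem proposition3:
  fixes d H Tmax :: nat and A B P :: "nat \<Rightarrow> nat \<Rightarrow> real"
  assumes "d \<ge> 1" and "H \<ge> 1" and "Tmax \<ge> 2"
    and "loss d H Tmax A B P = 0"
  shows "(\<forall>T\<in>{2..Tmax}.
            (\<forall>t\<in>{1..T-1}. P (T - 1) t = 0)
          \<and> (\<forall>i<d. P (T - 1) T * Cmat H A B i i = 1)
          \<and> (\<forall>i<d. \<forall>j<d. i \<noteq> j \<longrightarrow> Cmat H A B i j = 0))
       \<and> H \<ge> d
       \<and> (\<forall>lam. (\<forall>i<d. cmod (lam i) = 1) \<longrightarrow>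
            (\<forall>T\<in>{2..Tmax}. \<forall>i<d.
               model d H A B P lam T i
                 = (cnj (evec lam (T - 1) i) * evec lam T i) * evec lam T i
             \<and> model d H A B P lam T i = lam i ^ T))"
proof -
  note loss = assms(4)
  have causal: "\<forall>t\<in>{1..T-1}. P (T-1) t = 0" if "T \<in> {2..Tmax}" for T
    using zero_loss_earlier_weights[OF loss that, where i=0] assms(1) by auto
  have diag: "P (T-1) T * Cmat H A B i i = 1" if "T \<in> {2..Tmax}" "i < d" for T i
    using zero_loss_diagonal[OF loss that] .
  have off: "Cmat H A B i j = 0" if "T \<in> {2..Tmax}" "i < d" "j < d" "i \<noteq> j" for T i j
    using zero_loss_off_diagonal[OF loss that] .
  have "2 \<in> {2..Tmax}" using assms(3) by simp
  then have "d \<le> H"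
    using dim_le_if_Cmat_diagonal off diag by (metis mult_zero_right zero_neq_one)
  moreover have "model d H A B P lam T i = cnj (evec lam (T-1) i) * evec lam T i * evec lam T i"
    if "T \<in> {2..Tmax}" "i < d" for lam T i
  proof -
    have "model d H A B P lam T i = of_real (P (T-1) T * Cmat H A B i i)
        * (cnj (evec lam (T-1) i) * evec lam T i * evec lam T i)"
      by (rule model_eq_if_causal_diagonal) (use causal off that in auto)
    then show ?thesis
      using diag[OF that] by (simp del: of_real_mult)
  qed
  moreover have "cnj (evec lam (T-1) i) * evec lam T i * evec lam T i = lam i ^ T"
    if "cmod (lam i) = 1" "T \<ge> 2" for lam T i
    using that cnj_power_mult_power[OF that(1), of "T-2" "T-1"]
    by (simp add: evec_def numeral_2_eq_2 mult.assoc flip: power_Suc)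
  ultimately show ?thesis
    using causal diag off by auto
qed

end
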